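(* Consider a program compiled by a compiler that follows the principle that every machine code instruction that writes introduces maximal entropy. Let $x_1,\dots,x_n$ be any $n$ particular 32-bit values and consider $n$ data observations at points of the runtime trace that are pairwise independent (i.e., no two of them are dependent in the sense defined in the context). Then, across different compilations of the same source code, the probability that these $n$ observations have encryptions $\mathcal{E}[x_1],\dots,\mathcal{E}[x_n]$ (i.e., that the 32-bit plaintext values beneath the encryption at these points are $x_1,\dots,x_n$) is $1/2^{32n}$.
   Context: Setting (encrypted computing with chaotic compilation). A processor computes on encrypted 32-bit words; $\mathcal{E}[x]$ denotes an encryption of the plaintext $x\in\mathbb{Z}/2^{32}$. The compiler is stochastic: each compilation of the same source code produces machine code of identical structure and identical runtime trace structure (same instructions in the same order, same branches and loops), differing only in encrypted constants embedded in instructions. At each program point the compiler maintains an obfuscation scheme: for every register and memory location $l$, an offset $\Delta l \in \mathbb{Z}/2^{32}$ such that the plaintext stored in $l$ at runtime equals the nominal (programmer-intended) value plus $\Delta l$ (mod $2^{32}$). Every arithmetic instruction has an embedded encrypted constant that can be chosen to make the offset of the location it writes equal to any desired value. The runtime trace is the sequence of writes to registers and memory locations; a location read in the trace before being written in it is an input, whose offset is also specified by the scheme. The principle "every instruction that writes introduces maximal entropy" means: each arithmetic instruction that writes a location chooses the new offset of that location uniformly at random in $\mathbb{Z}/2^{32}$, independently of all other choices, and input offsets are likewise uniform and independent; the only exceptions are those forced by correctness: (i) a copy instruction preserves data (and offset) exactly, and (ii) where two control paths join (ends of loops, after conditional branches, subroutine returns, targets of gotos), the offset of each location must be equal on all joining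 paths; the instructions last writing a location $l$ before such a join on each path are called trailer instructions, forming a set that shares one common random offset. Two data observations in the trace are (delta) dependent if they are of the same register at the same point, or are the input and output of a copy instruction, or are of the same register after the last write to it in a control path before a join and before the next write. Probabilities are taken over the compiler's random choices. *)

theory Defs
  imports "HOL-Probability.Probability" "HOL-Library.Word"
begin

text \<open>An arithmetic write carries the identifier
  c of the (compile-time) offset choice it makes: for an ordinary arithmetic instruction
  this is the instruction itself, and all trailer instructions of one join share the same
  identifier (they share one common random offset).\<close>
datatype ('l, 'c) event = Arith 'c 'l | Copy 'l 'l

text \<open>Origin of the offset of a location: either an input location (read before written)
  or a random choice made by an arithmetic instruction / trailer set.\<close>
datatype ('l, 'c) origin = Inp 'l | Chosen 'c

fun origin_rev :: "('l, 'c) event list \<Rightarrow> 'l \<Rightarrow> ('l, 'c) origin" where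
  "origin_rev [] l = Inp l"
| "origin_rev (Arith c d # es) l = (if d = l then Chosen c else origin_rev es l)"
| "origin_rev (Copy s d # es) l = (if d = l then origin_rev es s else origin_rev es l)"

text \<open>Origin of the offset held by location l at trace point k (after the first k writes).\<close>
definition origin :: "('l, 'c) event list \<Rightarrow> nat \<times> 'l \<Rightarrow> ('l, 'c) origin" where
  "origin tr obs = origin_rev (rev (take (fst obs) tr)) (snd obs)"

text \<open>Delta dependence of two data observations (point, location): their offsets stem from
  the same random choice (same register at the same point, linked through copies, or
  through trailer instructions sharing one offset).\<close>
definition dependent :: "('l, 'c) event list \<Rightarrow> nat \<times> 'l \<Rightarrow> nat \<times> 'l \<Rightarrow> bool" where
  "dependent tr o1 o2 \<longleftrightarrow> origin tr o1 = origin tr o2"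

text \<open>Compiler's random choices (maximal entropy): every offset choice in the finite set S
  uniform and independent on Z/2^32.\<close>
definition compilations :: "('l, 'c) origin set \<Rightarrow> (('l, 'c) origin \<Rightarrow> 32 word) pmf" where
  "compilations S = pmf_of_set (S \<rightarrow>\<^sub>E (UNIV :: 32 word set))"

text \<open>Plaintext observed beneath the encryption: nominal value plus offset.\<close>
definition observed ::
  "('l, 'c) event list \<Rightarrow> (nat \<Rightarrow> 'l \<Rightarrow> 32 word) \<Rightarrow> (('l, 'c) origin \<Rightarrow> 32 word)
     \<Rightarrow> nat \<times> 'l \<Rightarrow> 32 word" where
  "observed tr nom \<omega> obs = nom (fst obs) (snd obs) + \<omega> (origin tr obs)"

end

theory Submission
  imports Defs
begin

text \<open>Observations that are pairwise independent read offsets coming from pairwise distinct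
  random choices of the compiler. Under maximal entropy these choices are uniform and
  independent on 32 word, and the observed plaintext is a fixed translate of the chosen
  offset; so the observations take any prescribed values with probability
  (1/2^32)^n.\<close>

lemma card_PiE_agreeing:
  assumes "finite S" "T \<subseteq> S" "finite A" "g ` T \<subseteq> A"
  shows "card {f \<in> S \<rightarrow>\<^sub>E A. \<forall>t\<in>T. f t = g t} = card A ^ (card S - card T)"
proof -
  let ?extend = "\<lambda>h s. if s \<in> S - T then h s else if s \<in> T then g s else undefined"
  have "bij_betw (\<lambda>f. restrict f (S - T)) {f \<in> S \<rightarrow>\<^sub>E A. \<forall>t\<in>T. f t = g t} ((S - T) \<rightarrow>\<^sub>E A)"
  proof (rule bij_betw_byWitness[where f' = ?extend])
    show "\<forall>f\<in>{f \<in> S \<rightarrow>\<^sub>E A. \<forall>t\<in>T. f t = g t}. ?extend (restrict f (S - T)) = f"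
      using assms(2) by (auto simp: PiE_def extensional_def fun_eq_iff)
    show "\<forall>h\<in>(S - T) \<rightarrow>\<^sub>E A. restrict (?extend h) (S - T) = h"
      by (auto simp: PiE_def extensional_def fun_eq_iff)
    show "(\<lambda>f. restrict f (S - T)) ` {f \<in> S \<rightarrow>\<^sub>E A. \<forall>t\<in>T. f t = g t} \<subseteq> (S - T) \<rightarrow>\<^sub>E A"
      by auto
    show "?extend ` ((S - T) \<rightarrow>\<^sub>E A) \<subseteq> {f \<in> S \<rightarrow>\<^sub>E A. \<forall>t\<in>T. f t = g t}"
      using assms(2,4) by (auto simp: PiE_def extensional_def image_subset_iff)
  qed
  then have "card {f \<in> S \<rightarrow>\<^sub>E A. \<forall>t\<in>T. f t = g t} = card ((S - T) \<rightarrow>\<^sub>E A)"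
    by (rule bij_betw_same_card)
  also have "\<dots> = card A ^ card (S - T)"
    using assms(1) by (simp add: card_PiE)
  also have "card (S - T) = card S - card T"
    using assms(1,2) by (simp add: card_Diff_subset finite_subset)
  finally show ?thesis .
qed

lemma prob_pmf_of_set_PiE_agreeing:
  assumes "finite S" "T \<subseteq> S" "finite A" "A \<noteq> {}" "g ` T \<subseteq> A"
  shows "measure_pmf.prob (pmf_of_set (S \<rightarrow>\<^sub>E A)) {f. \<forall>t\<in>T. f t = g t}
           = 1 / card A ^ card T"
proof -
  have nonempty: "S \<rightarrow>\<^sub>E A \<noteq> {}" and finite: "finite (S \<rightarrow>\<^sub>E A)"
    using assms(1,3,4) by (simp_all add: PiE_eq_empty_iff finite_PiE)
  have "card T \<le> card S"
    using assms(1,2) by (rule card_mono)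
  then have split: "card A ^ card S = card A ^ (card S - card T) * card A ^ card T"
    by (simp flip: power_add)
  have "card A ^ (card S - card T) \<noteq> 0"
    using assms(3,4) by simp
  moreover have "(S \<rightarrow>\<^sub>E A) \<inter> {f. \<forall>t\<in>T. f t = g t} = {f \<in> S \<rightarrow>\<^sub>E A. \<forall>t\<in>T. f t = g t}"
    by blast
  ultimately show ?thesis
    using card_PiE_agreeing[OF assms(1,2,3,5)] assms(1)
    by (simp add: measure_pmf_of_set[OF nonempty finite] card_PiE split)
qed

lemma prob_pmf_of_set_PiE_prescribed:
  assumes "finite S" "inj_on c I" "c ` I \<subseteq> S" "finite A" "A \<noteq> {}" "y ` I \<subseteq> A"
  shows "measure_pmf.prob (pmf_of_set (S \<rightarrow>\<^sub>E A)) {f. \<forall>i\<in>I. f (c i) = y i}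
           = 1 / card A ^ card I"
proof -
  let ?g = "y \<circ> inv_into I c"
  have "{f. \<forall>i\<in>I. f (c i) = y i} = {f. \<forall>t\<in>c ` I. f t = ?g t}"
    using assms(2) by auto
  moreover have "?g ` c ` I \<subseteq> A"
    using assms(2,6) by auto
  ultimately show ?thesis
    using prob_pmf_of_set_PiE_agreeing[OF assms(1,3,4,5), of ?g] card_image[OF assms(2)]
    by simp
qed

lemma inj_on_origin_if_independent:
  assumes "\<forall>i\<in>I. \<forall>j\<in>I. i \<noteq> j \<longrightarrow> \<not> dependent tr (obs i) (obs j)"
  shows "inj_on (\<lambda>i. origin tr (obs i)) I"
  using assms unfolding inj_on_def dependent_def by blast

lemma observed_eq_iff:
  "observed tr nom \<omega> ob = x \<longleftrightarrow> \<omega> (origin tr ob) = x - nom (fst ob) (snd ob)"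
  unfolding observed_def by (auto simp: algebra_simps)

theorem theorem3:
  fixes tr :: "('l, 'c) event list"
    and S :: "('l, 'c) origin set"
    and nom :: "nat \<Rightarrow> 'l \<Rightarrow> 32 word"
    and obs :: "nat \<Rightarrow> nat \<times> 'l"
    and x :: "nat \<Rightarrow> 32 word"
    and n :: nat
  assumes "finite S"
    and "\<forall>i<n. origin tr (obs i) \<in> S"
    and "\<forall>i<n. fst (obs i) \<le> length tr"
    and "\<forall>i<n. \<forall>j<n. i \<noteq> j \<longrightarrow> \<not> dependent tr (obs i) (obs j)"
  shows "measure_pmf.prob (compilations S)
           {\<omega>. \<forall>i<n. observed tr nom \<omega> (obs i) = x i} = 1 / 2 ^ (32 * n)"
proof -
  have "{\<omega>. \<forall>i<n. observed tr nom \<omega> (obs i) = x i}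
      = {\<omega>. \<forall>i\<in>{..<n}. \<omega> (origin tr (obs i)) = x i - nom (fst (obs i)) (snd (obs i))}"
    by (auto simp: observed_eq_iff)
  also have "measure_pmf.prob (compilations S) \<dots> = 1 / card (UNIV :: 32 word set) ^ n"
    unfolding compilations_def
    using assms(1,2,4) inj_on_origin_if_independent[of "{..<n}" tr obs]
    by (subst prob_pmf_of_set_PiE_prescribed) auto
  also have "\<dots> = 1 / 2 ^ (32 * n)"
    by (simp add: card_word power_mult)
  finally show ?thesis .
qed

end
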